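(* Let ${\mathbb X}$ be a non-degenerate Ptolemaic normed space, let $M\colon[0,\infty)\times[0,\infty)\to[0,\infty)$ be symmetric and moderately increasing, and suppose $\rho_M(x,y)=\dfrac{\Vert x-y\Vert}{M(\Vert x\Vert,\Vert y\Vert)}$ is a metric on ${\mathbb X}$. Let $g\colon{\mathbb X}\to{\mathbb X}$ satisfy $g(0)=0$ and $\frac1L\Vert x-y\Vert\le\Vert g(x)-g(y)\Vert\le L\Vert x-y\Vert$ for all $x,y\in{\mathbb X}$, for some $L\ge 1$. Then $\frac1{L^3}\rho_M(x,y)\le\rho_M(g(x),g(y))\le L^3\rho_M(x,y)$ for all $x,y\in{\mathbb X}$.
   Context: A normed space ${\mathbb X}$ is Ptolemaic if $\Vert z-w\Vert\Vert x-y\Vert\le\Vert y-w\Vert\Vert x-z\Vert+\Vert x-w\Vert\Vert z-y\Vert$ for all $x,y,z,w$; non-degenerate means ${\mathbb X}\ne\{0\}$. Convention $0/0=0$; metrics may take the value $\infty$. A function $f\colon[0,\infty)\to[0,\infty)$ is moderately increasing if it is increasing and $f(t)/t$ is decreasing; a function $M$ of two variables is moderately increasing if $M(x,\cdot)$ and $M(\cdot,x)$ are moderately increasing for each fixed $x\ge 0$. *)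

theory Defs
  imports "HOL-Analysis.Analysis" "HOL-Library.Extended_Real"
begin

definition ptolemaic :: "('a::real_normed_vector) itself \<Rightarrow> bool" where
  "ptolemaic _ \<longleftrightarrow> (\<forall>x y z w :: 'a.
     norm (z - w) * norm (x - y) \<le> norm (y - w) * norm (x - z) + norm (x - w) * norm (z - y))"

definition mod_incr :: "(real \<Rightarrow> real) \<Rightarrow> bool" where
  "mod_incr f \<longleftrightarrow> (\<forall>s t. 0 \<le> s \<longrightarrow> s \<le> t \<longrightarrow> f s \<le> f t) \<and>
                   (\<forall>s t. 0 < s \<longrightarrow> s \<le> t \<longrightarrow> f t / t \<le> f s / s)"

definition mod_incr2 :: "(real \<Rightarrow> real \<Rightarrow> real) \<Rightarrow> bool" where
  "mod_incr2 M \<longleftrightarrow> (\<forall>x\<ge>0. mod_incr (M x) \<and> mod_incr (\<lambda>t. M t x))"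

definition rhoM :: "(real \<Rightarrow> real \<Rightarrow> real) \<Rightarrow> 'a::real_normed_vector \<Rightarrow> 'a \<Rightarrow> ereal" where
  "rhoM M x y = (if M (norm x) (norm y) = 0
      then (if x = y then 0 else \<infinity>)
      else ereal (norm (x - y) / M (norm x) (norm y)))"

definition ext_metric :: "('a \<Rightarrow> 'a \<Rightarrow> ereal) \<Rightarrow> bool" where
  "ext_metric d \<longleftrightarrow> (\<forall>x y. 0 \<le> d x y) \<and> (\<forall>x y. d x y = 0 \<longleftrightarrow> x = y) \<and>
     (\<forall>x y. d x y = d y x) \<and> (\<forall>x y z. d x z \<le> d x y + d y z)"

end

theory Submission
  imports Defs
begin

text \<open>Since \<open>g 0 = 0\<close>, the bi-Lipschitz bound makes \<open>\<parallel>g x\<parallel>\<close> and \<open>\<parallel>x\<parallel>\<close> comparable up to the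
  factor \<open>L\<close>. A moderately increasing function changes by at most the factor \<open>L\<close> when its
  argument does, so the denominator of \<open>\<rho>\<^sub>M\<close> changes by at most \<open>L\<^sup>2\<close> and the numerator by at
  most \<open>L\<close>.\<close>

lemma mod_incr_mult_le:
  assumes "mod_incr f" and "0 < t" and "1 \<le> c"
  shows "f (c * t) \<le> c * f t"
proof -
  have "f (c * t) / (c * t) \<le> f t / t"
    using assms unfolding mod_incr_def by (simp add: mult_le_cancel_right1)
  then show ?thesis
    using assms(2,3) by (simp add: divide_simps mult.commute)
qed

lemma mod_incr_le_mult:
  assumes f: "mod_incr f" and "0 \<le> f 0" and "1 \<le> L"
    and "0 \<le> a" and "0 \<le> u" and "a \<le> L * u"
  shows "f a \<le> L * f u"
proof (cases "u = 0")
  case True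
  with assms show ?thesis by (simp add: mult_le_cancel_right1)
next
  case False
  with assms have "f a \<le> f (L * u)"
    using f unfolding mod_incr_def by blast
  also have "\<dots> \<le> L * f u"
    using mod_incr_mult_le[OF f] False assms by simp
  finally show ?thesis .
qed

lemma mod_incr2_le_mult:
  assumes M: "mod_incr2 M" and M_nonneg: "\<forall>s\<ge>0. \<forall>t\<ge>0. 0 \<le> M s t" and L: "1 \<le> L"
    and nonneg: "0 \<le> a" "0 \<le> b" "0 \<le> u" "0 \<le> v"
    and "a \<le> L * u" and "b \<le> L * v"
  shows "M a b \<le> L\<^sup>2 * M u v"
proof -
  have "M a b \<le> L * M u b"
    using mod_incr_le_mult[of "\<lambda>t. M t b"] M M_nonneg L nonneg assms
    unfolding mod_incr2_def by simp
  also have "\<dots> \<le> L * (L * M u v)"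
    using mod_incr_le_mult[of "M u"] M M_nonneg L nonneg assms
    unfolding mod_incr2_def by simp
  finally show ?thesis by (simp add: power2_eq_square)
qed

lemma rhoM_le_mult:
  fixes x y x' y' :: "'a::real_normed_vector"
  assumes "0 < A" and "0 < B"
    and dist: "norm (x' - y') \<le> A * norm (x - y)"
    and denom: "M (norm x) (norm y) \<le> B * M (norm x') (norm y')"
    and denom_nonneg: "0 \<le> M (norm x) (norm y)" "0 \<le> M (norm x') (norm y')"
  shows "rhoM M x' y' \<le> ereal (A * B) * rhoM M x y"
proof -
  let ?m = "M (norm x) (norm y)" and ?m' = "M (norm x') (norm y')"
  have same: "x' = y'" if "x = y"
    using dist that by simp
  show ?thesis
  proof (cases "?m' = 0")
    case True
    then have "?m = 0"
      using denom denom_nonneg by simp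
    with True same assms(1,2) show ?thesis
      unfolding rhoM_def by auto
  next
    case False
    then have m': "0 < ?m'"
      using denom_nonneg by simp
    show ?thesis
    proof (cases "?m = 0")
      case True
      with False same assms(1,2) show ?thesis
        unfolding rhoM_def by auto
    next
      case False
      then have m: "0 < ?m"
        using denom_nonneg by simp
      have "norm (x' - y') / ?m' \<le> A * norm (x - y) / ?m'"
        using dist m' by (simp add: divide_right_mono)
      also have "\<dots> \<le> A * norm (x - y) / (?m / B)"
        using denom m m' assms(1,2) by (intro divide_left_mono) (auto simp: field_simps)
      also have "\<dots> = A * B * (norm (x - y) / ?m)"
        by simp
      finally show ?thesis
        using m m' unfolding rhoM_def by simp
    qed
  qed
qed

lemma ereal_inverse_mult_le:
  assumes "0 < c" and "r \<le> ereal c * s"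
  shows "ereal (1 / c) * r \<le> s"
proof -
  have "ereal (1 / c) * r \<le> ereal (1 / c) * (ereal c * s)"
    using assms by (intro ereal_mult_left_mono) auto
  also have "\<dots> = s"
    using assms(1) by (simp flip: mult.assoc)
  finally show ?thesis .
qed

theorem lemma2p1:
  fixes M :: "real \<Rightarrow> real \<Rightarrow> real" and g :: "'a::real_normed_vector \<Rightarrow> 'a" and L :: real
  assumes "ptolemaic TYPE('a)"
    and "\<exists>x::'a. x \<noteq> 0"
    and "\<forall>s\<ge>0. \<forall>t\<ge>0. 0 \<le> M s t"
    and "\<forall>s\<ge>0. \<forall>t\<ge>0. M s t = M t s"
    and "mod_incr2 M"
    and "ext_metric (rhoM M :: 'a \<Rightarrow> 'a \<Rightarrow> ereal)"
    and "g 0 = 0"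
    and "L \<ge> 1"
    and "\<forall>x y. norm (x - y) / L \<le> norm (g x - g y) \<and> norm (g x - g y) \<le> L * norm (x - y)"
  shows "\<forall>x y. ereal (1 / L ^ 3) * rhoM M x y \<le> rhoM M (g x) (g y) \<and>
               rhoM M (g x) (g y) \<le> ereal (L ^ 3) * rhoM M x y"
proof (intro allI conjI)
  fix x y :: 'a
  have L: "0 < L" using assms(8) by simp
  have lip: "norm (g x - g y) \<le> L * norm (x - y)" "norm (x - y) \<le> L * norm (g x - g y)"
    and norm_g: "\<And>z. norm (g z) \<le> L * norm z" "\<And>z. norm z \<le> L * norm (g z)"
    using assms(7,9) L by (auto simp: divide_le_eq mult.commute dest: spec[of _ 0])
  have denom: "M (norm x) (norm y) \<le> L\<^sup>2 * M (norm (g x)) (norm (g y))"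
    "M (norm (g x)) (norm (g y)) \<le> L\<^sup>2 * M (norm x) (norm y)"
    using mod_incr2_le_mult[OF assms(5,3,8)] norm_g by simp_all
  have L3: "L ^ 3 = L * L\<^sup>2"
    by algebra
  show "rhoM M (g x) (g y) \<le> ereal (L ^ 3) * rhoM M x y"
    unfolding L3 using rhoM_le_mult[OF L _ lip(1) denom(1)] L assms(3) by simp
  have "rhoM M x y \<le> ereal (L ^ 3) * rhoM M (g x) (g y)"
    unfolding L3 using rhoM_le_mult[OF L _ lip(2) denom(2)] L assms(3) by simp
  then show "ereal (1 / L ^ 3) * rhoM M x y \<le> rhoM M (g x) (g y)"
    using L by (intro ereal_inverse_mult_le) simp_all
qed

end
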